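(* Let $W$ be a real $N\times N$ matrix with singular value decomposition $W=U\Sigma V^\top$ and rank $n$, where $1\le n<N$, and let $V_n$ be the $N\times n$ matrix of the first $n$ right singular vectors of $W$. Let $g:\mathbb{R}^N\times\mathbb{R}^N\to\mathbb{R}^N$ be continuously differentiable and suppose that its Jacobian with respect to the first argument satisfies $J_x(x,y)=\big(\partial g_i/\partial x_j\big)_{i,j}=aI$ for all $(x,y)$, for some real constant $a$. Let $M=V_n^\top$ and consider the complete dynamics $\dot x=g(x,Wx)$ and reduced dynamics $\dot X=Mg(M^+X,WM^+X)$. Then the alignment error \[\mathcal{E}(x)=\frac{1}{\sqrt n}\big\|Mg(x,Wx)-Mg(M^+Mx,WM^+Mx)\big\|\] vanishes for all $x\in\mathbb{R}^N$.
   Context: $\|\cdot\|$ is the Euclidean norm and $M^+$ the Moore–Penrose pseudoinverse of $M$. *)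

theory Defs
  imports "HOL-Analysis.Analysis"
begin

definition is_pinv :: "real^'m^'n \<Rightarrow> real^'n^'m \<Rightarrow> bool" where
  "is_pinv A X \<longleftrightarrow> A ** X ** A = A \<and> X ** A ** X = X \<and>
     transpose (A ** X) = A ** X \<and> transpose (X ** A) = X ** A"

definition pinv :: "real^'m^'n \<Rightarrow> real^'n^'m" where
  "pinv A = (THE X. is_pinv A X)"

definition diag_mat :: "('n \<Rightarrow> real) \<Rightarrow> real^'n^'n" where
  "diag_mat s = (\<chi> i j. if i = j then s i else 0)"

definition is_svd :: "((real,'N::{finite,linorder}) vec,'N) vec \<Rightarrow> ((real,'N) vec,'N) vec \<Rightarrow> ('N \<Rightarrow> real) \<Rightarrow> ((real,'N) vec,'N) vec \<Rightarrow> bool" where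
  "is_svd W U s V \<longleftrightarrow> orthogonal_matrix U \<and> orthogonal_matrix V \<and>
     (\<forall>i. 0 \<le> s i) \<and> (\<forall>i j. i \<le> j \<longrightarrow> s j \<le> s i) \<and>
     W = U ** diag_mat s ** transpose V"

text \<open>Vn (an N x n matrix, n = CARD('n)) consists of the first n columns of V,
  i.e. column k of Vn is column idx k of V, where idx is the order-preserving
  enumeration of an initial segment of the index type 'N.\<close>
definition first_cols :: "((real,'N::{finite,linorder}) vec,'N) vec \<Rightarrow> ((real,'n::{finite,linorder}) vec,'N) vec \<Rightarrow> bool" where
  "first_cols V Vn \<longleftrightarrow> (\<exists>idx :: 'n \<Rightarrow> 'N.
     strict_mono idx \<and> (\<forall>i k. i \<le> idx k \<longrightarrow> i \<in> range idx) \<and>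
     (\<forall>i k. Vn $ i $ k = V $ i $ idx k))"

end

theory Submission
  imports Defs
begin

text \<open>Write \<open>M = Vn\<^sup>T\<close>. Since \<open>Vn\<close> has orthonormal columns, \<open>M\<^sup>+ = Vn\<close> and \<open>M\<^sup>+M = Vn Vn\<^sup>T\<close> is the
  orthogonal projection onto the span of the first \<open>n\<close> right singular vectors. The rank
  condition forces all singular values beyond the first \<open>n\<close> to vanish, so \<open>W Vn Vn\<^sup>T = W\<close>.
  Hence \<open>x\<close> and \<open>x' = M\<^sup>+Mx\<close> have the same image under \<open>W\<close> and under \<open>M\<close>, while
  \<open>J\<^sub>x = aI\<close> makes \<open>g(x, y) - g(x', y) = a(x - x')\<close>; applying \<open>M\<close> gives \<open>0\<close>.\<close>

lemma pinv_unique: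
  fixes A :: "real^'m^'n"
  assumes X: "is_pinv A X" and Y: "is_pinv A Y"
  shows "X = Y"
proof -
  have a1: "A ** X ** A = A" and a2: "X ** A ** X = X" and a3: "transpose (A ** X) = A ** X"
    and a4: "transpose (X ** A) = X ** A" using X unfolding is_pinv_def by auto
  have b1: "A ** Y ** A = A" and b2: "Y ** A ** Y = Y" and b3: "transpose (A ** Y) = A ** Y"
    and b4: "transpose (Y ** A) = Y ** A" using Y unfolding is_pinv_def by auto
  have "X = X ** transpose (A ** X)" using a2 a3 by (simp add: matrix_mul_assoc)
  also have "\<dots> = X ** transpose X ** transpose (A ** Y ** A)"
    using b1 by (simp add: matrix_transpose_mul matrix_mul_assoc)
  also have "\<dots> = X ** (transpose (A ** X) ** transpose (A ** Y))"
    by (simp add: matrix_transpose_mul matrix_mul_assoc)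
  also have "\<dots> = (X ** A ** X) ** A ** Y" using a3 b3 by (simp add: matrix_mul_assoc)
  finally have X_eq: "X = X ** A ** Y" using a2 by simp
  have "Y = transpose (Y ** A) ** Y" using b2 b4 by simp
  also have "\<dots> = transpose (A ** X ** A) ** transpose Y ** Y"
    using a1 by (simp add: matrix_transpose_mul)
  also have "\<dots> = transpose (X ** A) ** transpose (Y ** A) ** Y"
    by (simp add: matrix_transpose_mul matrix_mul_assoc)
  also have "\<dots> = X ** A ** (Y ** A ** Y)" using a4 b4 by (simp add: matrix_mul_assoc)
  finally show ?thesis using X_eq b2 by simp
qed

lemma pinv_eq: "is_pinv A X \<Longrightarrow> pinv A = X"
  unfolding pinv_def using pinv_unique by blast

lemma pinv_orthonormal_rows:
  fixes A :: "real^'m^'n"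
  assumes "A ** transpose A = mat 1"
  shows "pinv A = transpose A"
  using assms
  by (intro pinv_eq) (simp add: is_pinv_def matrix_transpose_mul matrix_mul_assoc[symmetric])

lemma diag_mat_mult: "diag_mat s ** diag_mat t = diag_mat (\<lambda>i. s i * t i)"
proof -
  have "(\<Sum>k\<in>UNIV. (if i = k then s i else 0) * (if k = j then t k else 0))
        = (if i = j then s i * t i else 0)" for i j
    by (simp add: if_distrib[of "\<lambda>u. u * _"] sum.delta cong: if_cong)
  then show ?thesis by (simp add: diag_mat_def matrix_matrix_mult_def)
qed

lemma matrix_vector_mult_diag_mat: "diag_mat s *v v = (\<chi> i. s i * v $ i)"
proof -
  have "(\<Sum>j\<in>UNIV. (if i = j then s i else 0) * v $ j) = s i * v $ i" for i
    by (simp add: if_distrib[of "\<lambda>u. u * _"] cong: if_cong)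
  then show ?thesis by (simp add: diag_mat_def matrix_vector_mult_def)
qed

lemma diag_mat_mult_axis: "diag_mat s *v axis i c = axis i (s i * c)"
  by (simp add: matrix_vector_mult_diag_mat axis_def vec_eq_iff)

definition column_selection :: "('n \<Rightarrow> 'm) \<Rightarrow> real^'n^'m" where
  "column_selection idx = (\<chi> l k. if l = idx k then 1 else 0)"

lemma matrix_mul_column_selection: "(A ** column_selection idx) $ i $ k = A $ i $ idx k"
proof -
  have "(\<Sum>l\<in>UNIV. A $ i $ l * (if l = idx k then 1 else 0)) = A $ i $ idx k"
    by (simp add: if_distrib[of "\<lambda>u. _ * u"] cong: if_cong)
  then show ?thesis by (simp add: column_selection_def matrix_matrix_mult_def)
qed

lemma column_selection_transpose_mul:
  assumes "inj idx"
  shows "transpose (column_selection idx) ** column_selection idx = mat 1"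
proof -
  have "(\<Sum>l\<in>UNIV. (if l = idx k then 1 else 0) * (if l = idx k' then 1 else 0))
        = (if k = k' then 1 else (0::real))" for k k'
    using injD[OF assms, of k k'] by (simp add: if_distrib[of "\<lambda>u. u * _"] cong: if_cong)
  then show ?thesis
    by (simp add: column_selection_def matrix_matrix_mult_def transpose_def mat_def)
qed

lemma column_selection_mul_transpose:
  assumes "inj idx"
  shows "column_selection idx ** transpose (column_selection idx)
         = diag_mat (\<lambda>l. if l \<in> range idx then 1 else 0)"
proof -
  have "(\<Sum>k\<in>UNIV. (if l = idx k then 1 else 0) * (if l' = idx k then 1 else 0))
        = (if l = l' then if l \<in> range idx then 1 else 0 else (0::real))" for l l'
  proof (cases "l \<in> range idx")
    case True
    then obtain k0 where "l = idx k0" by blast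
    then have "l = idx k \<longleftrightarrow> k = k0" for k using injD[OF assms] by blast
    then show ?thesis using \<open>l = idx k0\<close>
      by (auto simp: if_distrib[of "\<lambda>u. u * _"] cong: if_cong)
  next
    case False
    then have "l \<noteq> idx k" for k by blast
    then show ?thesis by auto
  qed
  then show ?thesis
    by (simp add: column_selection_def matrix_matrix_mult_def transpose_def diag_mat_def)
qed

lemma orthonormal_selected_columns:
  assumes "orthogonal_matrix V" and "inj idx"
  shows "transpose (V ** column_selection idx) ** (V ** column_selection idx) = mat 1"
  using assms column_selection_transpose_mul
  by (simp add: matrix_transpose_mul matrix_mul_assoc orthogonal_matrix_def)
    (simp add: matrix_mul_assoc[symmetric])

lemma svd_mul_projection_selected_columns:
  assumes W: "W = U ** diag_mat s ** transpose V" and "orthogonal_matrix V" and "inj idx"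
    and "\<And>j. j \<notin> range idx \<Longrightarrow> s j = 0"
  shows "W ** ((V ** column_selection idx) ** transpose (V ** column_selection idx)) = W"
proof -
  let ?S = "column_selection idx"
  have "W ** ((V ** ?S) ** transpose (V ** ?S))
        = U ** diag_mat s ** (transpose V ** V) ** (?S ** transpose ?S) ** transpose V"
    by (simp add: W matrix_transpose_mul matrix_mul_assoc)
  also have "\<dots> = U ** (diag_mat s ** diag_mat (\<lambda>l. if l \<in> range idx then 1 else 0)) ** transpose V"
    using assms(2,3)
    by (simp add: orthogonal_matrix_def column_selection_mul_transpose matrix_mul_assoc)
  also have "diag_mat s ** diag_mat (\<lambda>l. if l \<in> range idx then 1 else 0) = diag_mat s"
  proof -
    have "(\<lambda>l. s l * (if l \<in> range idx then 1 else 0)) = s"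
      using assms(4) by (auto simp: fun_eq_iff)
    then show ?thesis by (simp add: diag_mat_mult)
  qed
  finally show ?thesis by (simp add: W)
qed

lemma card_nonzero_le_rank_diag_mat:
  fixes s :: "'n::finite \<Rightarrow> real"
  shows "card {i. s i \<noteq> 0} \<le> rank (diag_mat s)"
proof -
  let ?B = "(\<lambda>i. axis i 1) ` {i. s i \<noteq> 0} :: (real^'n) set"
  have "?B \<subseteq> range (\<lambda>x. diag_mat s *v x)"
  proof
    fix b assume "b \<in> ?B"
    then obtain i where "s i \<noteq> 0" "b = axis i 1" by blast
    then have "b = diag_mat s *v axis i (1 / s i)" by (simp add: diag_mat_mult_axis)
    then show "b \<in> range (\<lambda>x. diag_mat s *v x)" by blast
  qed
  then have "dim ?B \<le> rank (diag_mat s)" unfolding rank_dim_range by (rule dim_subset)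
  moreover have "dim ?B = card {i. s i \<noteq> 0}"
    by (simp add: dim_eq_card_independent independent_substdbasis image_subset_iff
        card_image inj_on_def axis_eq_axis)
  ultimately show ?thesis by simp
qed

lemma card_nonzero_singular_values_le_rank:
  assumes "is_svd W U s V"
  shows "card {i. s i \<noteq> 0} \<le> rank W"
proof -
  have "orthogonal_matrix U" "orthogonal_matrix V" "W = U ** diag_mat s ** transpose V"
    using assms unfolding is_svd_def by auto
  then have "diag_mat s = transpose U ** W ** V"
    by (simp add: orthogonal_matrix_def matrix_mul_assoc[symmetric])
      (simp add: matrix_mul_assoc)
  then have "rank (diag_mat s) \<le> rank W"
    by (metis rank_mul_le_left rank_mul_le_right order_trans)
  then show ?thesis using card_nonzero_le_rank_diag_mat order_trans by blast
qed

lemma antitone_vanishes_beyond_initial_segment: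
  fixes s :: "'N::{finite,linorder} \<Rightarrow> real" and idx :: "'n::finite \<Rightarrow> 'N"
  assumes nonneg: "\<And>i. 0 \<le> s i" and antitone: "\<And>i j. i \<le> j \<Longrightarrow> s j \<le> s i"
    and "inj idx" and segment: "\<And>i k. i \<le> idx k \<Longrightarrow> i \<in> range idx"
    and card_le: "card {i. s i \<noteq> 0} \<le> CARD('n)"
    and "j \<notin> range idx"
  shows "s j = 0"
proof (rule ccontr)
  assume "s j \<noteq> 0"
  then have "0 < s j" using nonneg[of j] by simp
  have "idx k < j" for k
    using segment[of j k] \<open>j \<notin> range idx\<close> not_le by blast
  then have "0 < s (idx k)" for k
    using antitone[of "idx k" j] \<open>0 < s j\<close> by (simp add: less_imp_le)
  then have "insert j (range idx) \<subseteq> {i. s i \<noteq> 0}"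
    using \<open>0 < s j\<close> by (auto simp: less_le)
  then have "card (insert j (range idx)) \<le> CARD('n)"
    using card_le card_mono[OF finite] order_trans by blast
  then show False using \<open>j \<notin> range idx\<close> \<open>inj idx\<close> by (simp add: card_image)
qed

lemma has_derivative_scaleR_id_diff:
  fixes f :: "'a::real_normed_vector \<Rightarrow> 'a"
  assumes "\<And>z. (f has_derivative (\<lambda>h. a *\<^sub>R h)) (at z)"
  shows "f x - f x' = a *\<^sub>R (x - x')"
proof -
  have "\<exists>c. \<forall>z\<in>UNIV. f z - a *\<^sub>R z = c"
  proof (rule has_derivative_zero_constant)
    fix z
    have "((\<lambda>z. f z - a *\<^sub>R z) has_derivative (\<lambda>h. a *\<^sub>R h - a *\<^sub>R h)) (at z)"
      using assms by (intro has_derivative_diff has_derivative_scaleR_right has_derivative_ident)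
    then show "((\<lambda>z. f z - a *\<^sub>R z) has_derivative (\<lambda>h. 0)) (at z within UNIV)" by simp
  qed simp
  then obtain c where "\<And>z. f z - a *\<^sub>R z = c" by blast
  from this[of x] this[of x'] show ?thesis by (simp add: algebra_simps)
qed

theorem corollaryS61:
  fixes W :: "((real,'N::{finite,linorder}) vec,'N) vec"
    and U V :: "((real,'N) vec,'N) vec" and s :: "'N \<Rightarrow> real"
    and Vn :: "((real,'n::{finite,linorder}) vec,'N) vec"
    and g :: "(real,'N) vec \<Rightarrow> (real,'N) vec \<Rightarrow> (real,'N) vec"
    and a :: real
  assumes svd: "is_svd W U s V"
    and rk: "rank W = CARD('n)"
    and lt: "CARD('n) < CARD('N)"
    and Vn: "first_cols V Vn"
    and C1: "\<exists>D :: ((real,'N) vec \<times> (real,'N) vec) \<Rightarrow> (((real,'N) vec \<times> (real,'N) vec) \<Rightarrow>\<^sub>L (real,'N) vec).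
               (\<forall>p. ((\<lambda>q. g (fst q) (snd q)) has_derivative blinfun_apply (D p)) (at p))
               \<and> continuous_on UNIV D"
    and Jx: "\<forall>x y. ((\<lambda>z. g z y) has_derivative (\<lambda>h. a *\<^sub>R h)) (at x)"
  shows "\<forall>x :: (real,'N) vec.
    (1 / sqrt (real CARD('n))) *
      norm (transpose Vn *v g x (W *v x)
            - transpose Vn *v g (pinv (transpose Vn) *v (transpose Vn *v x))
                                (W *v (pinv (transpose Vn) *v (transpose Vn *v x)))) = 0"
proof
  fix x :: "(real,'N) vec"
  obtain idx :: "'n \<Rightarrow> 'N" where "strict_mono idx"
    and segment: "\<And>i k. i \<le> idx k \<Longrightarrow> i \<in> range idx" and "\<And>i k. Vn $ i $ k = V $ i $ idx k"
    using Vn unfolding first_cols_def by blast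
  then have inj: "inj idx" and Vn_eq: "Vn = V ** column_selection idx"
    by (auto simp: strict_mono_imp_inj_on vec_eq_iff matrix_mul_column_selection)
  have V: "orthogonal_matrix V" and W: "W = U ** diag_mat s ** transpose V"
    using svd unfolding is_svd_def by auto
  have MM: "transpose Vn ** Vn = mat 1"
    using orthonormal_selected_columns[OF V inj] by (simp add: Vn_eq)
  then have pinv_M: "pinv (transpose Vn) = Vn"
    using pinv_orthonormal_rows[of "transpose Vn"] by simp
  have "s j = 0" if "j \<notin> range idx" for j
    by (rule antitone_vanishes_beyond_initial_segment[OF _ _ inj segment _ that])
      (use svd rk card_nonzero_singular_values_le_rank[OF svd] in \<open>auto simp: is_svd_def\<close>)
  then have W_proj: "W ** (Vn ** transpose Vn) = W"
    using svd_mul_projection_selected_columns[OF W V inj] by (simp add: Vn_eq)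
  define x' where "x' = Vn *v (transpose Vn *v x)"
  have "W *v x' = W *v x" and "transpose Vn *v x' = transpose Vn *v x"
    by (metis W_proj MM matrix_vector_mul_assoc matrix_vector_mul_lid x'_def)+
  moreover have "g x y - g x' y = a *\<^sub>R (x - x')" for y
    using Jx by (intro has_derivative_scaleR_id_diff) auto
  ultimately have "transpose Vn *v g x (W *v x) - transpose Vn *v g x' (W *v x') = 0"
    by (metis matrix_vector_mult_diff_distrib matrix_vector_mult_scaleR right_minus_eq scaleR_zero_right)
  then show "(1 / sqrt (real CARD('n))) *
      norm (transpose Vn *v g x (W *v x)
            - transpose Vn *v g (pinv (transpose Vn) *v (transpose Vn *v x))
                                (W *v (pinv (transpose Vn) *v (transpose Vn *v x)))) = 0"
    unfolding pinv_M x'_def[symmetric] by simp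
qed

end
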